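(* In the setting of the context, suppose Assumption (A) holds with data $(g,n,m,d)$. Then there exist $a_1,a_2\in\mathbb R_+$ such that for all $z\in\mathsf Z$: (1) $|v^*(z)|\le\sum_{t=0}^{n-1}\beta^t\mathbb E_z[|r(Z_t)|+|c(Z_t)|]+a_1g(z)+a_2$; (2) $|\psi^*(z)|\le\sum_{t=1}^{n-1}\beta^t\mathbb E_z|r(Z_t)|+\sum_{t=0}^{n-1}\beta^t\mathbb E_z|c(Z_t)|+a_1g(z)+a_2$.
   Context: $P$ is a stochastic kernel on a measurable space $(\mathsf Z,\mathscr Z)$, $P^0(z,\cdot)=\delta_z$, $P^n(z,B)=\int P(z',B)P^{n-1}(z,dz')$; $(Z_t)$ is a time-homogeneous Markov process with kernel $P$ adapted to a filtration; $\mathbb E_zh(Z_t)=\int h\,dP^t(z,\cdot)$. $\beta\in(0,1)$; $r,c:\mathsf Z\to\mathbb R$ measurable. $v^*(z)=\sup_\tau\mathbb E_z\{\sum_{t=0}^{\tau-1}\beta^tc(Z_t)+\beta^\tau r(Z_\tau)\}$ over a.s. finite $\mathbb N_0$-valued stopping times, $\psi^*(z)=c(z)+\beta\int v^*(z')P(z,dz')$. Assumption (A): there exist measurable $g:\mathsf Z\to\mathbb R_+$, $n\in\mathbb N_0$, $m,d\ge0$ with $\beta m<1$ such that $\max\{\int|r|dP^n(z,\cdot),\int|c|dP^n(z,\cdot)\}\le g(z)$ and $\int g(z')P(z,dz')\le mg(z)+d$ for all $z$. *)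

theory Defs
  imports "HOL-Probability.Probability"
begin

primrec kpow :: "'z measure \<Rightarrow> ('z \<Rightarrow> 'z measure) \<Rightarrow> nat \<Rightarrow> 'z \<Rightarrow> 'z measure" where
  "kpow Zm P 0 z = return Zm z"
| "kpow Zm P (Suc n) z = bind (kpow Zm P n z) P"

definition eexp :: "'a measure \<Rightarrow> ('a \<Rightarrow> real) \<Rightarrow> ereal" where
  "eexp M f = enn2ereal (\<integral>\<^sup>+ x. ennreal (f x) \<partial>M) - enn2ereal (\<integral>\<^sup>+ x. ennreal (- f x) \<partial>M)"

definition eint :: "'a measure \<Rightarrow> ('a \<Rightarrow> ereal) \<Rightarrow> ereal" where
  "eint M f = enn2ereal (\<integral>\<^sup>+ x. e2ennreal (f x) \<partial>M) - enn2ereal (\<integral>\<^sup>+ x. e2ennreal (- f x) \<partial>M)"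

definition vstar :: "('z \<Rightarrow> 'w measure) \<Rightarrow> (nat \<Rightarrow> 'w measure) \<Rightarrow> (nat \<Rightarrow> 'w \<Rightarrow> 'z)
    \<Rightarrow> real \<Rightarrow> ('z \<Rightarrow> real) \<Rightarrow> ('z \<Rightarrow> real) \<Rightarrow> 'z \<Rightarrow> ereal" where
  "vstar M F Z \<beta> r c z = (SUP \<tau> \<in> {\<tau>. stopping_time F \<tau>}.
      eexp (M z) (\<lambda>\<omega>. (\<Sum>t<\<tau> \<omega>. \<beta> ^ t * c (Z t \<omega>)) + \<beta> ^ (\<tau> \<omega>) * r (Z (\<tau> \<omega>) \<omega>)))"

definition psistar :: "('z \<Rightarrow> 'z measure) \<Rightarrow> ('z \<Rightarrow> 'w measure) \<Rightarrow> (nat \<Rightarrow> 'w measure)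
    \<Rightarrow> (nat \<Rightarrow> 'w \<Rightarrow> 'z) \<Rightarrow> real \<Rightarrow> ('z \<Rightarrow> real) \<Rightarrow> ('z \<Rightarrow> real) \<Rightarrow> 'z \<Rightarrow> ereal" where
  "psistar P M F Z \<beta> r c z = ereal (c z) + ereal \<beta> * eint (P z) (vstar M F Z \<beta> r c)"

end

theory Submission
  imports Defs
begin

text \<open>Every stopping reward is dominated pathwise by \<open>\<Sum>\<^sub>t \<beta>\<^sup>t (|r| + |c|)(Z\<^sub>t)\<close>, and stopping at
  once gives \<open>v*(z) \<ge> r(z)\<close>; hence \<open>|v*(z)|\<close> is at most the discounted sum of the expectations
  \<open>E\<^sub>z(|r| + |c|)(Z\<^sub>t)\<close>. By Assumption (A) the term at time \<open>n + k\<close> is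
  at most \<open>2 E\<^sub>z g(Z\<^sub>k)\<close>, and iterating the drift condition gives \<open>E\<^sub>z g(Z\<^sub>k) + D \<le> \<rho>\<^sup>k (g(z) + D)\<close>
  for any \<open>\<rho> > 1\<close> with \<open>\<rho> \<ge> m\<close> and \<open>D = d / (\<rho> - 1)\<close>. Choosing \<open>\<rho>\<close> with \<open>\<beta>\<rho> < 1\<close> makes the tail a
  geometric series, affine in \<open>g(z)\<close>. For \<open>\<psi>*\<close> the integral against \<open>P(z, \<cdot>)\<close> shifts the time
  index by one; the drift condition and \<open>\<beta>m < 1\<close> absorb the extra boundary term.\<close>

lemma kpow_measurable:
  assumes P: "P \<in> Zm \<rightarrow>\<^sub>M prob_algebra Zm"
  shows "kpow Zm P t \<in> Zm \<rightarrow>\<^sub>M prob_algebra Zm"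
proof (induction t)
  case 0
  have "kpow Zm P 0 = return Zm" by (rule ext) simp
  then show ?case by simp
next
  case (Suc t)
  have "kpow Zm P (Suc t) = (\<lambda>z. bind (kpow Zm P t z) P)" by (rule ext) simp
  then show ?case using measurable_bind_prob_space[OF Suc P] by simp
qed

lemma
  assumes P: "P \<in> Zm \<rightarrow>\<^sub>M prob_algebra Zm" and z: "z \<in> space Zm"
  shows sets_kpow: "sets (kpow Zm P t z) = sets Zm"
    and prob_space_kpow: "prob_space (kpow Zm P t z)"
    and space_kpow: "space (kpow Zm P t z) = space Zm"
proof -
  have "kpow Zm P t z \<in> space (prob_algebra Zm)"
    using measurable_space[OF kpow_measurable[OF P] z] .
  then show sets: "sets (kpow Zm P t z) = sets Zm" and "prob_space (kpow Zm P t z)"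
    by (auto simp: space_prob_algebra)
  from sets_eq_imp_space_eq[OF sets] show "space (kpow Zm P t z) = space Zm" .
qed

lemma kpow_1:
  assumes P: "P \<in> Zm \<rightarrow>\<^sub>M prob_algebra Zm" and z: "z \<in> space Zm"
  shows "kpow Zm P 1 z = P z"
  using bind_return[OF measurable_prob_algebraD[OF P] z] by simp

lemma nn_integral_kpow_Suc:
  assumes P: "P \<in> Zm \<rightarrow>\<^sub>M prob_algebra Zm" and z: "z \<in> space Zm"
    and f: "f \<in> borel_measurable Zm"
  shows "(\<integral>\<^sup>+x. f x \<partial>kpow Zm P (Suc t) z) = (\<integral>\<^sup>+x. (\<integral>\<^sup>+y. f y \<partial>P x) \<partial>kpow Zm P t z)"
proof -
  have "P \<in> kpow Zm P t z \<rightarrow>\<^sub>M subprob_algebra Zm"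
    using measurable_prob_algebraD[OF P] by (simp add: measurable_cong_sets[OF sets_kpow[OF P z] refl])
  from nn_integral_bind[OF f this] show ?thesis by simp
qed

lemma nn_integral_kpow_add:
  assumes P: "P \<in> Zm \<rightarrow>\<^sub>M prob_algebra Zm" and z: "z \<in> space Zm"
    and f: "f \<in> borel_measurable Zm"
  shows "(\<integral>\<^sup>+x. f x \<partial>kpow Zm P (n + k) z) = (\<integral>\<^sup>+y. (\<integral>\<^sup>+x. f x \<partial>kpow Zm P n y) \<partial>kpow Zm P k z)"
  using f
proof (induction n arbitrary: f)
  case 0
  show ?case
    by (simp, rule nn_integral_cong) (simp add: nn_integral_return space_kpow[OF P z] 0)
next
  case (Suc n)
  have Pf: "(\<lambda>x. \<integral>\<^sup>+y. f y \<partial>P x) \<in> borel_measurable Zm"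
    using Suc.prems measurable_prob_algebraD[OF P] by measurable
  have "(\<integral>\<^sup>+x. f x \<partial>kpow Zm P (Suc n + k) z) = (\<integral>\<^sup>+x. (\<integral>\<^sup>+y. f y \<partial>P x) \<partial>kpow Zm P (n + k) z)"
    using nn_integral_kpow_Suc[OF P z Suc.prems] by simp
  also have "\<dots> = (\<integral>\<^sup>+y. (\<integral>\<^sup>+x. (\<integral>\<^sup>+w. f w \<partial>P x) \<partial>kpow Zm P n y) \<partial>kpow Zm P k z)"
    by (rule Suc.IH[OF Pf])
  also have "\<dots> = (\<integral>\<^sup>+y. (\<integral>\<^sup>+x. f x \<partial>kpow Zm P (Suc n) y) \<partial>kpow Zm P k z)"
    by (rule nn_integral_cong) (use nn_integral_kpow_Suc[OF P _ Suc.prems] space_kpow[OF P z] in simp)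
  finally show ?case .
qed

lemma nn_integral_kpow_drift_le:
  assumes P: "P \<in> Zm \<rightarrow>\<^sub>M prob_algebra Zm" and z: "z \<in> space Zm"
    and g_meas: "g \<in> borel_measurable Zm" and g_nonneg: "\<And>x. x \<in> space Zm \<Longrightarrow> 0 \<le> g x"
    and drift: "\<And>x. x \<in> space Zm \<Longrightarrow> (\<integral>\<^sup>+y. ennreal (g y) \<partial>P x) \<le> ennreal (m * g x + d)"
    and m: "0 \<le> m" "m \<le> \<rho>" and d: "0 \<le> d" and D: "0 \<le> D" "d + D \<le> \<rho> * D"
  shows "(\<integral>\<^sup>+x. ennreal (g x) \<partial>kpow Zm P k z) + ennreal D \<le> ennreal (\<rho> ^ k * (g z + D))"
proof (induction k)
  case 0
  show ?case using z g_meas g_nonneg[OF z] D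
    by (simp add: nn_integral_return ennreal_plus[symmetric] del: ennreal_plus)
next
  case (Suc k)
  let ?G = "\<integral>\<^sup>+x. ennreal (g x) \<partial>kpow Zm P k z"
  interpret prob_space "kpow Zm P k z" using prob_space_kpow[OF P z] .
  have g: "(\<lambda>x. ennreal (g x)) \<in> borel_measurable (kpow Zm P k z)"
    using g_meas by (simp add: measurable_cong_sets[OF sets_kpow[OF P z] refl])
  have "(\<integral>\<^sup>+x. ennreal (g x) \<partial>kpow Zm P (Suc k) z) = (\<integral>\<^sup>+x. (\<integral>\<^sup>+y. ennreal (g y) \<partial>P x) \<partial>kpow Zm P k z)"
    using nn_integral_kpow_Suc[OF P z] g_meas by simp
  also have "\<dots> \<le> (\<integral>\<^sup>+x. ennreal m * ennreal (g x) + ennreal d \<partial>kpow Zm P k z)"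
    by (rule nn_integral_mono)
      (use drift g_nonneg m d space_kpow[OF P z] in \<open>auto simp: ennreal_mult\<close>)
  also have "\<dots> = ennreal m * ?G + ennreal d"
    using g emeasure_space_1 by (simp add: nn_integral_add nn_integral_cmult)
  finally have "(\<integral>\<^sup>+x. ennreal (g x) \<partial>kpow Zm P (Suc k) z) + ennreal D \<le> ennreal m * ?G + (ennreal d + ennreal D)"
    by (simp add: add_right_mono ac_simps)
  also have "\<dots> \<le> ennreal \<rho> * ?G + ennreal \<rho> * ennreal D"
    using m d D by (intro add_mono mult_right_mono) (auto simp: ennreal_mult[symmetric] ennreal_plus[symmetric] simp del: ennreal_plus)
  also have "\<dots> = ennreal \<rho> * (?G + ennreal D)"
    by (simp add: distrib_left)
  also have "\<dots> \<le> ennreal \<rho> * ennreal (\<rho> ^ k * (g z + D))"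
    by (rule mult_left_mono[OF Suc]) simp
  also have "\<dots> = ennreal (\<rho> ^ Suc k * (g z + D))"
    using m D g_nonneg[OF z] by (simp add: ennreal_mult[symmetric] mult.assoc)
  finally show ?case .
qed

lemma ennreal_discounted_payoff_le_suminf:
  fixes b :: real and x y :: "nat \<Rightarrow> real"
  assumes b: "0 < b"
  shows "ennreal ((\<Sum>t<T. b ^ t * x t) + b ^ T * y T) \<le> (\<Sum>t. ennreal (b ^ t) * ennreal (\<bar>y t\<bar> + \<bar>x t\<bar>))"
proof -
  have "(\<Sum>t<T. b ^ t * x t) \<le> (\<Sum>t<T. b ^ t * (\<bar>y t\<bar> + \<bar>x t\<bar>))"
    by (rule sum_mono) (use b in \<open>auto intro!: mult_left_mono\<close>)
  moreover have "b ^ T * y T \<le> b ^ T * (\<bar>y T\<bar> + \<bar>x T\<bar>)"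
    by (rule mult_left_mono) (use b in auto)
  ultimately have "ennreal ((\<Sum>t<T. b ^ t * x t) + b ^ T * y T) \<le> ennreal (\<Sum>t<Suc T. b ^ t * (\<bar>y t\<bar> + \<bar>x t\<bar>))"
    by (intro ennreal_leI) simp
  also have "\<dots> = (\<Sum>t<Suc T. ennreal (b ^ t) * ennreal (\<bar>y t\<bar> + \<bar>x t\<bar>))"
    using b by (subst sum_ennreal[symmetric]) (auto simp: ennreal_mult simp del: ennreal_plus)
  also have "\<dots> \<le> (\<Sum>t. ennreal (b ^ t) * ennreal (\<bar>y t\<bar> + \<bar>x t\<bar>))"
    by (rule sum_le_suminf[OF summableI]) auto
  finally show ?thesis .
qed

lemma sum_Suc_shift_le:
  fixes u w :: "nat \<Rightarrow> ennreal"
  shows "w 0 + (\<Sum>t<n. u (Suc t) + w (Suc t)) \<le> (\<Sum>t\<in>{1..<n}. u t) + (\<Sum>t<n. w t) + (u n + w n)"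
proof -
  have "(\<Sum>t<n. u (Suc t)) = (\<Sum>t\<in>{1..<Suc n}. u t)"
    using sum.shift_bounds_Suc_ivl[of u 0 n] by (simp add: atLeast0LessThan)
  also have "\<dots> \<le> (\<Sum>t\<in>{1..<n}. u t) + u n"
    by simp
  finally have u: "(\<Sum>t<n. u (Suc t)) \<le> (\<Sum>t\<in>{1..<n}. u t) + u n" .
  have w: "w 0 + (\<Sum>t<n. w (Suc t)) = (\<Sum>t<n. w t) + w n"
    using sum.lessThan_Suc_shift[of w n] by (simp add: ac_simps)
  have "w 0 + (\<Sum>t<n. u (Suc t) + w (Suc t)) = (\<Sum>t<n. u (Suc t)) + (w 0 + (\<Sum>t<n. w (Suc t)))"
    by (simp add: sum.distrib ac_simps)
  also have "\<dots> \<le> (\<Sum>t\<in>{1..<n}. u t) + u n + ((\<Sum>t<n. w t) + w n)"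
    unfolding w using u by (rule add_right_mono)
  finally show ?thesis by (simp add: ac_simps)
qed

lemma e2ennreal_le_if_abs_le:
  assumes "\<bar>x\<bar> \<le> enn2ereal y"
  shows "e2ennreal x \<le> y" and "e2ennreal (- x) \<le> y"
proof -
  have "x \<le> enn2ereal y" "- x \<le> enn2ereal y"
    using assms by (cases x; cases "enn2ereal y"; simp)+
  from this[THEN e2ennreal_mono] show "e2ennreal x \<le> y" "e2ennreal (- x) \<le> y" by simp_all
qed

lemma abs_enn2ereal_diff_le:
  "A \<le> T \<Longrightarrow> B \<le> T \<Longrightarrow> \<bar>enn2ereal A - enn2ereal B\<bar> \<le> enn2ereal T"
proof (cases "T = top")
  case False
  assume a: "A \<le> T" "B \<le> T"
  obtain t where t: "T = ennreal t" "0 \<le> t" using False by (cases T) auto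
  have "A \<noteq> top" "B \<noteq> top" using a False top_unique by auto
  then obtain a' b' where ab: "A = ennreal a'" "0 \<le> a'" "B = ennreal b'" "0 \<le> b'"
    by (metis ennreal_cases)
  have "a' \<le> t" "b' \<le> t" using a t ab by auto
  then show ?thesis using t ab by simp
qed simp

lemma abs_ereal_add_mult_le:
  assumes b: "0 < b" and e: "\<bar>e\<bar> \<le> enn2ereal X"
  shows "\<bar>ereal a + ereal b * e\<bar> \<le> enn2ereal (ennreal \<bar>a\<bar> + ennreal b * X)"
proof (cases "X = top")
  case True
  then show ?thesis using b by (simp add: ennreal_mult_top)
next
  case False
  then obtain x where x: "X = ennreal x" "0 \<le> x" by (cases X) auto
  with e obtain y where y: "e = ereal y" "\<bar>y\<bar> \<le> x" by (cases e) auto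
  have "\<bar>b * y\<bar> \<le> b * x" using b y by (simp add: abs_mult mult_left_mono)
  then have "\<bar>a + b * y\<bar> \<le> \<bar>a\<bar> + b * x" by linarith
  then show ?thesis
    using x y b by (simp add: ennreal_mult[symmetric] ennreal_plus[symmetric] del: ennreal_plus)
qed

lemma enn2ereal_sum_power_mult:
  "0 \<le> b \<Longrightarrow> enn2ereal (\<Sum>t\<in>A. ennreal (b ^ t) * X t) = (\<Sum>t\<in>A. ereal (b ^ t) * enn2ereal (X t))"
  by (subst sum_enn2ereal[symmetric]) (auto simp: times_ennreal.rep_eq)

locale markov_process =
  fixes Zm :: "'z measure" and P :: "'z \<Rightarrow> 'z measure"
    and Om :: "'w measure" and M :: "'z \<Rightarrow> 'w measure" and F :: "nat \<Rightarrow> 'w measure"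
    and Z :: "nat \<Rightarrow> 'w \<Rightarrow> 'z"
  assumes P_kernel: "P \<in> Zm \<rightarrow>\<^sub>M prob_algebra Zm"
    and M_prob: "\<And>z. z \<in> space Zm \<Longrightarrow> prob_space (M z)"
    and M_sets: "\<And>z. z \<in> space Zm \<Longrightarrow> sets (M z) = sets Om"
    and filt: "filtration (space Om) F"
    and F_sub: "\<And>t. sets (F t) \<subseteq> sets Om"
    and adapted: "\<And>t. Z t \<in> F t \<rightarrow>\<^sub>M Zm"
    and start: "\<And>z. z \<in> space Zm \<Longrightarrow> (AE \<omega> in M z. Z 0 \<omega> = z)"
    and markov: "\<And>z t A B. z \<in> space Zm \<Longrightarrow> A \<in> sets (F t) \<Longrightarrow> B \<in> sets Zm \<Longrightarrow>
        emeasure (M z) (A \<inter> (Z (Suc t) -` B \<inter> space Om))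
          = (\<integral>\<^sup>+ \<omega>. emeasure (P (Z t \<omega>)) B * indicator A \<omega> \<partial>M z)"
begin

lemma space_M: "z \<in> space Zm \<Longrightarrow> space (M z) = space Om"
  using sets_eq_imp_space_eq[OF M_sets] .

lemma space_F: "space (F t) = space Om"
  using filt by (simp add: filtration_def)

lemma measurable_Z:
  assumes z: "z \<in> space Zm"
  shows "Z t \<in> M z \<rightarrow>\<^sub>M Zm"
proof -
  have "Z t \<in> Om \<rightarrow>\<^sub>M Zm"
    using measurable_mono[of Zm Zm "F t" Om] F_sub[of t] space_F[of t] adapted[of t] by auto
  then show ?thesis by (simp add: measurable_cong_sets[OF M_sets[OF z] refl])
qed

lemma nn_integral_Z0:
  assumes z: "z \<in> space Zm"
  shows "(\<integral>\<^sup>+\<omega>. h (Z 0 \<omega>) \<partial>M z) = h z"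
proof -
  interpret prob_space "M z" using M_prob[OF z] .
  have "(\<integral>\<^sup>+\<omega>. h (Z 0 \<omega>) \<partial>M z) = (\<integral>\<^sup>+\<omega>. h z \<partial>M z)"
    by (rule nn_integral_cong_AE) (use start[OF z] in auto)
  then show ?thesis by (simp add: emeasure_space_1)
qed

lemma distr_Z_eq_kpow:
  assumes z: "z \<in> space Zm"
  shows "distr (M z) Zm (Z t) = kpow Zm P t z"
proof (induction t)
  case 0
  show ?case
  proof (rule measure_eqI)
    fix A assume A: "A \<in> sets (distr (M z) Zm (Z 0))"
    have "emeasure (distr (M z) Zm (Z 0)) A = (\<integral>\<^sup>+x. indicator A x \<partial>distr (M z) Zm (Z 0))"
      using A by simp
    also have "\<dots> = (\<integral>\<^sup>+\<omega>. indicator A (Z 0 \<omega>) \<partial>M z)"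
      using A by (intro nn_integral_distr measurable_Z[OF z]) simp
    also have "\<dots> = emeasure (kpow Zm P 0 z) A"
      using A by (simp add: nn_integral_Z0[OF z])
    finally show "emeasure (distr (M z) Zm (Z 0)) A = emeasure (kpow Zm P 0 z) A" .
  qed simp
next
  case (Suc t)
  show ?case
  proof (rule measure_eqI)
    show "sets (distr (M z) Zm (Z (Suc t))) = sets (kpow Zm P (Suc t) z)"
      using sets_kpow[OF P_kernel z, of "Suc t"] by simp
  next
    fix B assume "B \<in> sets (distr (M z) Zm (Z (Suc t)))"
    then have B: "B \<in> sets Zm" by simp
    have Om: "space Om \<in> sets (F t)" using sets.top[of "F t"] space_F[of t] by simp
    have "emeasure (distr (M z) Zm (Z (Suc t))) B = emeasure (M z) (space Om \<inter> (Z (Suc t) -` B \<inter> space Om))"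
      using B measurable_Z[OF z] space_M[OF z] by (simp add: emeasure_distr Int_absorb1 Int_commute)
    also have "\<dots> = (\<integral>\<^sup>+ \<omega>. emeasure (P (Z t \<omega>)) B \<partial>M z)"
      unfolding markov[OF z Om B] by (rule nn_integral_cong) (simp add: space_M[OF z])
    also have "\<dots> = (\<integral>\<^sup>+ x. emeasure (P x) B \<partial>distr (M z) Zm (Z t))"
      using B measurable_prob_algebraD[OF P_kernel] measurable_Z[OF z]
      by (subst nn_integral_distr) (auto intro: measurable_emeasure_kernel)
    also have "\<dots> = emeasure (kpow Zm P (Suc t) z) B"
      using Suc B measurable_space[OF kpow_measurable[OF P_kernel] z]
      by (simp add: emeasure_bind_prob_algebra[OF _ P_kernel])
    finally show "emeasure (distr (M z) Zm (Z (Suc t))) B = emeasure (kpow Zm P (Suc t) z) B" .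
  qed
qed

lemma nn_integral_Z:
  assumes z: "z \<in> space Zm" and h: "h \<in> borel_measurable Zm"
  shows "(\<integral>\<^sup>+\<omega>. h (Z t \<omega>) \<partial>M z) = (\<integral>\<^sup>+x. h x \<partial>kpow Zm P t z)"
proof -
  have "h \<in> borel_measurable (distr (M z) Zm (Z t))"
    using h by (simp add: measurable_cong_sets[OF sets_distr refl])
  with nn_integral_distr[OF measurable_Z[OF z]] show ?thesis
    by (simp add: distr_Z_eq_kpow[OF z])
qed

end


locale drift_bounded_stopping = markov_process +
  fixes \<beta> :: real and r c g :: "'z \<Rightarrow> real" and n :: nat and m d :: real
  assumes beta: "0 < \<beta>" "\<beta> < 1"
    and r_meas: "r \<in> borel_measurable Zm" and c_meas: "c \<in> borel_measurable Zm"
    and g_meas: "g \<in> borel_measurable Zm" and g_nonneg: "\<And>z. z \<in> space Zm \<Longrightarrow> 0 \<le> g z"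
    and m_nonneg: "0 \<le> m" and d_nonneg: "0 \<le> d" and bm: "\<beta> * m < 1"
    and A_r: "\<And>z. z \<in> space Zm \<Longrightarrow> (\<integral>\<^sup>+ z'. ennreal \<bar>r z'\<bar> \<partial>kpow Zm P n z) \<le> ennreal (g z)"
    and A_c: "\<And>z. z \<in> space Zm \<Longrightarrow> (\<integral>\<^sup>+ z'. ennreal \<bar>c z'\<bar> \<partial>kpow Zm P n z) \<le> ennreal (g z)"
    and A_g: "\<And>z. z \<in> space Zm \<Longrightarrow> (\<integral>\<^sup>+ z'. ennreal (g z') \<partial>P z) \<le> ennreal (m * g z + d)"
begin

definition \<rho> :: real where "\<rho> = (max m 1 + 1 / \<beta>) / 2"
definition D :: real where "D = d / (\<rho> - 1)"
definition a1 :: real where "a1 = 2 / (1 - \<beta> * \<rho>)"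
definition a2 :: real where "a2 = a1 * D"

lemma
  shows m_le_rho: "m \<le> \<rho>" and one_less_rho: "1 < \<rho>" and beta_rho_less_1: "\<beta> * \<rho> < 1"
    and D_nonneg: "0 \<le> D" and d_plus_D: "d + D = \<rho> * D"
    and a1_nonneg: "0 \<le> a1" and a2_nonneg: "0 \<le> a2"
    and a1_absorbs: "2 \<le> a1 * (1 - \<beta> * m)" and a2_absorbs: "\<beta> * (a1 * d + a2) \<le> a2"
proof -
  have "m < 1 / \<beta>" "1 < 1 / \<beta>" using bm beta by (simp_all add: field_simps)
  then show m: "m \<le> \<rho>" and \<rho>: "1 < \<rho>" unfolding \<rho>_def by auto
  have "\<beta> * \<rho> = (\<beta> * max m 1 + 1) / 2" unfolding \<rho>_def using beta by (simp add: field_simps)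
  moreover have "\<beta> * max m 1 < 1" using bm beta by (auto simp: max_def)
  ultimately show \<beta>\<rho>: "\<beta> * \<rho> < 1" by simp
  show D: "0 \<le> D" unfolding D_def using d_nonneg \<rho> by simp
  show dD: "d + D = \<rho> * D" unfolding D_def using \<rho> by (simp add: field_simps)
  show a1: "0 \<le> a1" unfolding a1_def using \<beta>\<rho> by simp
  then show "0 \<le> a2" unfolding a2_def using D by simp
  have "1 - \<beta> * \<rho> \<le> 1 - \<beta> * m" using m beta by (simp add: mult_left_mono)
  then show "2 \<le> a1 * (1 - \<beta> * m)" unfolding a1_def using \<beta>\<rho> by (simp add: field_simps)
  have "\<beta> * (a1 * d + a2) = a1 * ((\<beta> * \<rho>) * D)" unfolding a2_def
    by (simp add: algebra_simps flip: dD)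
  also have "\<dots> \<le> a1 * D"
    using a1 D \<beta>\<rho> beta \<rho> by (intro mult_left_mono mult_left_le_one_le) auto
  finally show "\<beta> * (a1 * d + a2) \<le> a2" unfolding a2_def .
qed

definition Er :: "nat \<Rightarrow> 'z \<Rightarrow> ennreal" where
  "Er t z = (\<integral>\<^sup>+\<omega>. ennreal \<bar>r (Z t \<omega>)\<bar> \<partial>M z)"

definition Ec :: "nat \<Rightarrow> 'z \<Rightarrow> ennreal" where
  "Ec t z = (\<integral>\<^sup>+\<omega>. ennreal \<bar>c (Z t \<omega>)\<bar> \<partial>M z)"

definition Erc :: "nat \<Rightarrow> 'z \<Rightarrow> ennreal" where
  "Erc t z = (\<integral>\<^sup>+\<omega>. ennreal (\<bar>r (Z t \<omega>)\<bar> + \<bar>c (Z t \<omega>)\<bar>) \<partial>M z)"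

definition discounted_sum :: "'z \<Rightarrow> ennreal" where
  "discounted_sum z = (\<Sum>t. ennreal (\<beta> ^ t) * Erc t z)"

lemma Erc_eq_Er_plus_Ec:
  assumes z: "z \<in> space Zm"
  shows "Erc t z = Er t z + Ec t z"
proof -
  have "(\<lambda>\<omega>. ennreal \<bar>r (Z t \<omega>)\<bar>) \<in> borel_measurable (M z)"
    and "(\<lambda>\<omega>. ennreal \<bar>c (Z t \<omega>)\<bar>) \<in> borel_measurable (M z)"
    using measurable_Z[OF z, of t] r_meas c_meas by measurable
  then show ?thesis unfolding Erc_def Er_def Ec_def by (simp add: nn_integral_add)
qed

lemma Erc_eq_nn_integral_kpow:
  assumes z: "z \<in> space Zm"
  shows "Erc t z = (\<integral>\<^sup>+x. ennreal (\<bar>r x\<bar> + \<bar>c x\<bar>) \<partial>kpow Zm P t z)"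
  unfolding Erc_def by (rule nn_integral_Z[OF z]) (use r_meas c_meas in measurable)

lemma Erc_n_le:
  assumes z: "z \<in> space Zm"
  shows "Erc n z \<le> 2 * ennreal (g z)"
proof -
  have "Er n z \<le> ennreal (g z)"
    unfolding Er_def using nn_integral_Z[OF z, of "\<lambda>x. ennreal \<bar>r x\<bar>" n] A_r[OF z] r_meas by simp
  moreover have "Ec n z \<le> ennreal (g z)"
    unfolding Ec_def using nn_integral_Z[OF z, of "\<lambda>x. ennreal \<bar>c x\<bar>" n] A_c[OF z] c_meas by simp
  ultimately show ?thesis unfolding Erc_eq_Er_plus_Ec[OF z] mult_2 by (rule add_mono)
qed

lemma Erc_tail_le:
  assumes z: "z \<in> space Zm"
  shows "Erc (n + k) z \<le> ennreal (2 * \<rho> ^ k * (g z + D))"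
proof -
  have "Erc (n + k) z = (\<integral>\<^sup>+y. (\<integral>\<^sup>+x. ennreal (\<bar>r x\<bar> + \<bar>c x\<bar>) \<partial>kpow Zm P n y) \<partial>kpow Zm P k z)"
    unfolding Erc_eq_nn_integral_kpow[OF z]
    by (rule nn_integral_kpow_add[OF P_kernel z]) (use r_meas c_meas in measurable)
  also have "\<dots> = (\<integral>\<^sup>+y. Erc n y \<partial>kpow Zm P k z)"
    by (rule nn_integral_cong) (simp add: Erc_eq_nn_integral_kpow space_kpow[OF P_kernel z])
  also have "\<dots> \<le> (\<integral>\<^sup>+y. 2 * ennreal (g y) \<partial>kpow Zm P k z)"
    by (rule nn_integral_mono) (simp add: Erc_n_le space_kpow[OF P_kernel z])
  also have "\<dots> = 2 * (\<integral>\<^sup>+y. ennreal (g y) \<partial>kpow Zm P k z)"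
    using g_meas by (simp add: nn_integral_cmult measurable_cong_sets[OF sets_kpow[OF P_kernel z] refl])
  also have "\<dots> \<le> 2 * ennreal (\<rho> ^ k * (g z + D))"
  proof (rule mult_left_mono)
    show "(\<integral>\<^sup>+y. ennreal (g y) \<partial>kpow Zm P k z) \<le> ennreal (\<rho> ^ k * (g z + D))"
      using nn_integral_kpow_drift_le[OF P_kernel z g_meas g_nonneg A_g m_nonneg m_le_rho d_nonneg
          D_nonneg order_eq_refl[OF d_plus_D], of k]
      by (rule order_trans[rotated]) (auto intro: add_increasing2)
  qed simp
  also have "\<dots> = ennreal (2 * \<rho> ^ k * (g z + D))"
    using ennreal_mult[of 2 "\<rho> ^ k * (g z + D)"] one_less_rho D_nonneg g_nonneg[OF z]
    by (simp add: mult.assoc)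
  finally show ?thesis .
qed

lemma discounted_tail_le:
  assumes z: "z \<in> space Zm"
  shows "(\<Sum>k. ennreal (\<beta> ^ (k + n)) * Erc (k + n) z) \<le> ennreal (a1 * g z + a2)"
proof -
  let ?C = "2 * (g z + D)"
  have C: "0 \<le> ?C" using g_nonneg[OF z] D_nonneg by simp
  have \<beta>\<rho>: "0 \<le> \<beta> * \<rho>" "\<beta> * \<rho> < 1" using one_less_rho beta_rho_less_1 beta by auto
  have term_le: "ennreal (\<beta> ^ (k + n)) * Erc (k + n) z \<le> ennreal (?C * (\<beta> * \<rho>) ^ k)" for k
  proof -
    have "ennreal (\<beta> ^ (k + n)) * Erc (k + n) z \<le> ennreal (\<beta> ^ (k + n)) * ennreal (\<rho> ^ k * ?C)"
    proof (rule mult_left_mono)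
      have "2 * \<rho> ^ k * (g z + D) = \<rho> ^ k * ?C" by (simp add: algebra_simps)
      then show "Erc (k + n) z \<le> ennreal (\<rho> ^ k * ?C)"
        by (metis Erc_tail_le[OF z, of k] add.commute)
    qed simp
    also have "\<dots> = ennreal (\<beta> ^ (k + n) * (\<rho> ^ k * ?C))"
      using beta one_less_rho C by (simp add: ennreal_mult)
    also have "\<dots> \<le> ennreal (\<beta> ^ k * (\<rho> ^ k * ?C))"
      using beta one_less_rho C
      by (intro ennreal_leI mult_right_mono) (auto simp: power_add mult_left_le power_le_one)
    finally show ?thesis by (simp add: power_mult_distrib ac_simps)
  qed
  have "(\<Sum>k. ennreal (\<beta> ^ (k + n)) * Erc (k + n) z) \<le> (\<Sum>k. ennreal (?C * (\<beta> * \<rho>) ^ k))"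
    by (rule suminf_le[OF term_le]) auto
  also have "\<dots> = ennreal (?C * (1 / (1 - \<beta> * \<rho>)))"
    using \<beta>\<rho> C by (intro suminf_ennreal_eq sums_mult geometric_sums) auto
  also have "?C * (1 / (1 - \<beta> * \<rho>)) = a1 * g z + a2"
    unfolding a1_def a2_def by (simp add: add_divide_distrib algebra_simps)
  finally show ?thesis .
qed

lemma discounted_sum_le:
  assumes z: "z \<in> space Zm"
  shows "discounted_sum z \<le> (\<Sum>t<n. ennreal (\<beta> ^ t) * Erc t z) + ennreal (a1 * g z + a2)"
proof -
  have "discounted_sum z = (\<Sum>k. ennreal (\<beta> ^ (k + n)) * Erc (k + n) z) + (\<Sum>t<n. ennreal (\<beta> ^ t) * Erc t z)"
    unfolding discounted_sum_def by (rule suminf_offset) simp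
  then show ?thesis using discounted_tail_le[OF z] by (simp add: add.commute add_left_mono)
qed


lemma
  assumes z: "z \<in> space Zm"
  shows sets_P: "sets (P z) = sets Zm" and space_P: "space (P z) = space Zm"
    and prob_space_P: "prob_space (P z)"
  using sets_kpow[OF P_kernel z, of 1] space_kpow[OF P_kernel z, of 1]
    prob_space_kpow[OF P_kernel z, of 1] kpow_1[OF P_kernel z] by simp_all

lemma borel_measurable_Erc: "(\<lambda>x. Erc t x) \<in> borel_measurable Zm"
proof -
  have "(\<lambda>x. \<integral>\<^sup>+y. ennreal (\<bar>r y\<bar> + \<bar>c y\<bar>) \<partial>kpow Zm P t x) \<in> borel_measurable Zm"
    using measurable_prob_algebraD[OF kpow_measurable[OF P_kernel]] r_meas c_meas by measurable
  then show ?thesis by (simp add: measurable_cong[OF Erc_eq_nn_integral_kpow])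
qed

lemma nn_integral_P_Erc:
  assumes z: "z \<in> space Zm"
  shows "(\<integral>\<^sup>+x. Erc t x \<partial>P z) = Erc (Suc t) z"
proof -
  let ?h = "\<lambda>x. ennreal (\<bar>r x\<bar> + \<bar>c x\<bar>)"
  have h: "?h \<in> borel_measurable Zm"
    using r_meas c_meas by measurable
  have "Erc (Suc t) z = (\<integral>\<^sup>+x. ?h x \<partial>kpow Zm P (t + 1) z)"
    by (simp add: Erc_eq_nn_integral_kpow[OF z])
  also have "\<dots> = (\<integral>\<^sup>+y. (\<integral>\<^sup>+x. ?h x \<partial>kpow Zm P t y) \<partial>P z)"
    unfolding nn_integral_kpow_add[OF P_kernel z h] kpow_1[OF P_kernel z] ..
  also have "\<dots> = (\<integral>\<^sup>+y. Erc t y \<partial>P z)"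
    by (rule nn_integral_cong) (simp add: Erc_eq_nn_integral_kpow space_P[OF z])
  finally show ?thesis ..
qed

lemma nn_integral_discounted_payoffs:
  assumes z: "z \<in> space Zm"
  shows "(\<integral>\<^sup>+\<omega>. (\<Sum>t. ennreal (\<beta> ^ t) * ennreal (\<bar>r (Z t \<omega>)\<bar> + \<bar>c (Z t \<omega>)\<bar>)) \<partial>M z) = discounted_sum z"
proof -
  have meas: "(\<lambda>\<omega>. ennreal (\<bar>r (Z t \<omega>)\<bar> + \<bar>c (Z t \<omega>)\<bar>)) \<in> borel_measurable (M z)" for t
    using measurable_Z[OF z, of t] r_meas c_meas by measurable
  then have meas_mult:
    "(\<lambda>\<omega>. ennreal (\<beta> ^ t) * ennreal (\<bar>r (Z t \<omega>)\<bar> + \<bar>c (Z t \<omega>)\<bar>)) \<in> borel_measurable (M z)" for t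
    by measurable
  have "(\<integral>\<^sup>+\<omega>. (\<Sum>t. ennreal (\<beta> ^ t) * ennreal (\<bar>r (Z t \<omega>)\<bar> + \<bar>c (Z t \<omega>)\<bar>)) \<partial>M z)
      = (\<Sum>t. \<integral>\<^sup>+\<omega>. ennreal (\<beta> ^ t) * ennreal (\<bar>r (Z t \<omega>)\<bar> + \<bar>c (Z t \<omega>)\<bar>) \<partial>M z)"
    by (rule nn_integral_suminf[OF meas_mult])
  also have "\<dots> = discounted_sum z"
    unfolding discounted_sum_def Erc_def by (intro suminf_cong nn_integral_cmult meas)
  finally show ?thesis .
qed

lemma eexp_payoff_le_discounted_sum:
  assumes z: "z \<in> space Zm"
  shows "eexp (M z) (\<lambda>\<omega>. (\<Sum>t<\<tau> \<omega>. \<beta> ^ t * c (Z t \<omega>)) + \<beta> ^ (\<tau> \<omega>) * r (Z (\<tau> \<omega>) \<omega>))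
    \<le> enn2ereal (discounted_sum z)"
proof -
  have "(\<integral>\<^sup>+\<omega>. ennreal ((\<Sum>t<\<tau> \<omega>. \<beta> ^ t * c (Z t \<omega>)) + \<beta> ^ (\<tau> \<omega>) * r (Z (\<tau> \<omega>) \<omega>)) \<partial>M z)
      \<le> discounted_sum z"
    unfolding nn_integral_discounted_payoffs[OF z, symmetric]
    by (rule nn_integral_mono, rule ennreal_discounted_payoff_le_suminf[OF beta(1)])
  then show ?thesis
    unfolding eexp_def by (intro order.trans[OF ereal_diff_le_self]) (simp_all add: less_eq_ennreal.rep_eq)
qed

lemma eexp_stop_at_start:
  assumes z: "z \<in> space Zm"
  shows "eexp (M z) (\<lambda>\<omega>. r (Z 0 \<omega>)) = ereal (r z)"
  using nn_integral_Z0[OF z, of "\<lambda>x. ennreal (r x)"] nn_integral_Z0[OF z, of "\<lambda>x. ennreal (- r x)"]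
  unfolding eexp_def by (cases "0 \<le> r z") (auto simp: ennreal_neg zero_ennreal.rep_eq)

lemma abs_r_le_discounted_sum:
  assumes z: "z \<in> space Zm"
  shows "ereal \<bar>r z\<bar> \<le> enn2ereal (discounted_sum z)"
proof -
  have "Erc 0 z = ennreal (\<bar>r z\<bar> + \<bar>c z\<bar>)"
    unfolding Erc_def by (rule nn_integral_Z0[OF z])
  then have "ennreal \<bar>r z\<bar> \<le> ennreal (\<beta> ^ 0) * Erc 0 z" by (simp add: ennreal_leI)
  also have "\<dots> \<le> discounted_sum z"
    unfolding discounted_sum_def
    using sum_le_suminf[OF summableI, of "{0}" "\<lambda>t. ennreal (\<beta> ^ t) * Erc t z"] by simp
  finally show ?thesis by (simp add: less_eq_ennreal.rep_eq)
qed

lemma abs_vstar_le_discounted_sum: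
  assumes z: "z \<in> space Zm"
  shows "\<bar>vstar M F Z \<beta> r c z\<bar> \<le> enn2ereal (discounted_sum z)"
proof (rule ereal_abs_leI)
  show "vstar M F Z \<beta> r c z \<le> enn2ereal (discounted_sum z)"
    unfolding vstar_def by (rule SUP_least) (rule eexp_payoff_le_discounted_sum[OF z])
  have "ereal (r z) \<le> vstar M F Z \<beta> r c z"
    unfolding vstar_def
    by (rule SUP_upper2[of "\<lambda>_. 0"]) (use stopping_time_const eexp_stop_at_start[OF z] in auto)
  then show "- vstar M F Z \<beta> r c z \<le> enn2ereal (discounted_sum z)"
    using abs_r_le_discounted_sum[OF z]
    by (cases "vstar M F Z \<beta> r c z"; cases "discounted_sum z") (auto simp: ereal_uminus_le_reorder)
qed

lemma vstar_bound:
  assumes z: "z \<in> space Zm"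
  shows "\<bar>vstar M F Z \<beta> r c z\<bar> \<le>
    (\<Sum>t<n. ereal (\<beta> ^ t) * enn2ereal (\<integral>\<^sup>+ \<omega>. ennreal (\<bar>r (Z t \<omega>)\<bar> + \<bar>c (Z t \<omega>)\<bar>) \<partial>M z))
    + ereal (a1 * g z + a2)"
proof -
  have "\<bar>vstar M F Z \<beta> r c z\<bar> \<le> enn2ereal (discounted_sum z)"
    by (rule abs_vstar_le_discounted_sum[OF z])
  also have "\<dots> \<le> enn2ereal ((\<Sum>t<n. ennreal (\<beta> ^ t) * Erc t z) + ennreal (a1 * g z + a2))"
    using discounted_sum_le[OF z] by (simp add: less_eq_ennreal.rep_eq)
  also have "\<dots> = (\<Sum>t<n. ereal (\<beta> ^ t) * enn2ereal (\<integral>\<^sup>+ \<omega>. ennreal (\<bar>r (Z t \<omega>)\<bar> + \<bar>c (Z t \<omega>)\<bar>) \<partial>M z))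
      + ereal (a1 * g z + a2)"
    using a1_nonneg a2_nonneg g_nonneg[OF z] beta
    by (simp add: plus_ennreal.rep_eq Erc_def enn2ereal_sum_power_mult)
  finally show ?thesis .
qed

lemma abs_eint_vstar_le:
  assumes z: "z \<in> space Zm"
  shows "\<bar>eint (P z) (vstar M F Z \<beta> r c)\<bar> \<le> enn2ereal (\<integral>\<^sup>+x. discounted_sum x \<partial>P z)"
  unfolding eint_def
proof (rule abs_enn2ereal_diff_le)
  note bound = e2ennreal_le_if_abs_le[OF abs_vstar_le_discounted_sum]
  show "(\<integral>\<^sup>+x. e2ennreal (vstar M F Z \<beta> r c x) \<partial>P z) \<le> (\<integral>\<^sup>+x. discounted_sum x \<partial>P z)"
    by (rule nn_integral_mono) (simp add: bound space_P[OF z])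
  show "(\<integral>\<^sup>+x. e2ennreal (- vstar M F Z \<beta> r c x) \<partial>P z) \<le> (\<integral>\<^sup>+x. discounted_sum x \<partial>P z)"
    by (rule nn_integral_mono) (simp add: bound space_P[OF z])
qed

lemma nn_integral_P_discounted_sum_le:
  assumes z: "z \<in> space Zm"
  shows "(\<integral>\<^sup>+x. discounted_sum x \<partial>P z)
    \<le> (\<Sum>t<n. ennreal (\<beta> ^ t) * Erc (Suc t) z) + ennreal (a1 * (m * g z + d) + a2)"
proof -
  interpret prob_space "P z" using prob_space_P[OF z] .
  have meas: "(\<lambda>x. Erc t x) \<in> borel_measurable (P z)" "(\<lambda>x. ennreal (g x)) \<in> borel_measurable (P z)" for t
    using borel_measurable_Erc g_meas by (simp_all add: measurable_cong_sets[OF sets_P[OF z] refl])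
  have "(\<integral>\<^sup>+x. discounted_sum x \<partial>P z)
      \<le> (\<integral>\<^sup>+x. (\<Sum>t<n. ennreal (\<beta> ^ t) * Erc t x) + ennreal (a1 * g x + a2) \<partial>P z)"
    by (rule nn_integral_mono) (simp add: discounted_sum_le space_P[OF z])
  also have "\<dots> = (\<integral>\<^sup>+x. (\<Sum>t<n. ennreal (\<beta> ^ t) * Erc t x) + (ennreal a1 * ennreal (g x) + ennreal a2) \<partial>P z)"
    by (rule nn_integral_cong) (simp add: a1_nonneg a2_nonneg g_nonneg space_P[OF z] ennreal_mult)
  also have "\<dots> = (\<Sum>t<n. ennreal (\<beta> ^ t) * Erc (Suc t) z) + (ennreal a1 * (\<integral>\<^sup>+x. ennreal (g x) \<partial>P z) + ennreal a2)"
    using meas by (simp add: nn_integral_add nn_integral_sum nn_integral_cmult nn_integral_P_Erc[OF z] emeasure_space_1)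
  also have "\<dots> \<le> (\<Sum>t<n. ennreal (\<beta> ^ t) * Erc (Suc t) z) + (ennreal a1 * ennreal (m * g z + d) + ennreal a2)"
    using A_g[OF z] by (intro add_left_mono add_right_mono mult_left_mono) auto
  also have "ennreal a1 * ennreal (m * g z + d) + ennreal a2 = ennreal (a1 * (m * g z + d) + a2)"
    using a1_nonneg a2_nonneg g_nonneg[OF z] m_nonneg d_nonneg by (simp add: ennreal_mult)
  finally show ?thesis .
qed

lemma boundary_term_absorbed:
  assumes "0 \<le> y" "x \<le> 2 * y"
  shows "x + \<beta> * (a1 * (m * y + d) + a2) \<le> a1 * y + a2"
proof -
  have "2 * y \<le> a1 * (1 - \<beta> * m) * y" using a1_absorbs assms(1) by (rule mult_right_mono)
  then show ?thesis using a2_absorbs assms(2) by (simp add: algebra_simps)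
qed

lemma discounted_boundary_le:
  assumes z: "z \<in> space Zm"
  shows "ennreal (\<beta> ^ n) * Erc n z + ennreal (\<beta> * (a1 * (m * g z + d) + a2)) \<le> ennreal (a1 * g z + a2)"
proof -
  have g: "0 \<le> g z" using g_nonneg[OF z] .
  have "ennreal (\<beta> ^ n) * Erc n z \<le> ennreal (\<beta> ^ n) * (2 * ennreal (g z))"
    by (intro mult_left_mono Erc_n_le[OF z]) simp
  also have "\<dots> = ennreal (\<beta> ^ n * (2 * g z))"
    using beta g ennreal_mult[of 2 "g z"] by (simp add: ennreal_mult)
  finally have "ennreal (\<beta> ^ n) * Erc n z + ennreal (\<beta> * (a1 * (m * g z + d) + a2))
      \<le> ennreal (\<beta> ^ n * (2 * g z) + \<beta> * (a1 * (m * g z + d) + a2))"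
    using beta g a1_nonneg a2_nonneg m_nonneg d_nonneg by (simp add: add_right_mono)
  also have "\<dots> \<le> ennreal (a1 * g z + a2)"
  proof (intro ennreal_leI boundary_term_absorbed[OF g])
    show "\<beta> ^ n * (2 * g z) \<le> 2 * g z"
      using beta g by (intro mult_left_le_one_le) (auto simp: power_le_one)
  qed
  finally show ?thesis .
qed

lemma psi_majorant_le:
  assumes z: "z \<in> space Zm"
  shows "ennreal \<bar>c z\<bar> + ennreal \<beta> * ((\<Sum>t<n. ennreal (\<beta> ^ t) * Erc (Suc t) z) + ennreal (a1 * (m * g z + d) + a2))
    \<le> (\<Sum>t\<in>{1..<n}. ennreal (\<beta> ^ t) * Er t z) + (\<Sum>t<n. ennreal (\<beta> ^ t) * Ec t z) + ennreal (a1 * g z + a2)"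
proof -
  let ?u = "\<lambda>t. ennreal (\<beta> ^ t) * Er t z" and ?w = "\<lambda>t. ennreal (\<beta> ^ t) * Ec t z"
  let ?Q = "a1 * (m * g z + d) + a2"
  have g: "0 \<le> g z" using g_nonneg[OF z] .
  have Q: "0 \<le> ?Q" using a1_nonneg a2_nonneg g m_nonneg d_nonneg by simp
  have w0: "ennreal \<bar>c z\<bar> = ?w 0"
    unfolding Ec_def using nn_integral_Z0[OF z, of "\<lambda>x. ennreal \<bar>c x\<bar>"] by simp
  have shift: "ennreal \<beta> * (ennreal (\<beta> ^ t) * Erc (Suc t) z) = ?u (Suc t) + ?w (Suc t)" for t
    using beta by (simp add: Erc_eq_Er_plus_Ec[OF z] ennreal_mult distrib_left mult.assoc)
  have boundary: "?u n + ?w n + ennreal (\<beta> * ?Q) \<le> ennreal (a1 * g z + a2)"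
    using discounted_boundary_le[OF z] by (simp add: Erc_eq_Er_plus_Ec[OF z] distrib_left)
  have \<beta>Q: "ennreal \<beta> * ennreal ?Q = ennreal (\<beta> * ?Q)"
    by (rule ennreal_mult[symmetric]) (use beta Q in auto)
  have "ennreal \<beta> * ((\<Sum>t<n. ennreal (\<beta> ^ t) * Erc (Suc t) z) + ennreal ?Q)
      = (\<Sum>t<n. ?u (Suc t) + ?w (Suc t)) + ennreal (\<beta> * ?Q)"
    unfolding distrib_left[of "ennreal \<beta>"] sum_distrib_left shift \<beta>Q ..
  then have "ennreal \<bar>c z\<bar> + ennreal \<beta> * ((\<Sum>t<n. ennreal (\<beta> ^ t) * Erc (Suc t) z) + ennreal ?Q)
      = ?w 0 + (\<Sum>t<n. ?u (Suc t) + ?w (Suc t)) + ennreal (\<beta> * ?Q)"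
    by (simp add: w0 add.assoc)
  also have "\<dots> \<le> (\<Sum>t\<in>{1..<n}. ?u t) + (\<Sum>t<n. ?w t) + (?u n + ?w n) + ennreal (\<beta> * ?Q)"
    by (intro add_right_mono sum_Suc_shift_le)
  also have "\<dots> \<le> (\<Sum>t\<in>{1..<n}. ?u t) + (\<Sum>t<n. ?w t) + ennreal (a1 * g z + a2)"
    using boundary by (simp add: add.assoc add_left_mono)
  finally show ?thesis .
qed

lemma psistar_bound:
  assumes z: "z \<in> space Zm"
  shows "\<bar>psistar P M F Z \<beta> r c z\<bar> \<le>
    (\<Sum>t\<in>{1..<n}. ereal (\<beta> ^ t) * enn2ereal (\<integral>\<^sup>+ \<omega>. ennreal \<bar>r (Z t \<omega>)\<bar> \<partial>M z))
    + (\<Sum>t<n. ereal (\<beta> ^ t) * enn2ereal (\<integral>\<^sup>+ \<omega>. ennreal \<bar>c (Z t \<omega>)\<bar> \<partial>M z))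
    + ereal (a1 * g z + a2)"
proof -
  have "\<bar>psistar P M F Z \<beta> r c z\<bar> \<le> enn2ereal (ennreal \<bar>c z\<bar> + ennreal \<beta> * (\<integral>\<^sup>+x. discounted_sum x \<partial>P z))"
    unfolding psistar_def by (rule abs_ereal_add_mult_le[OF beta(1) abs_eint_vstar_le[OF z]])
  also have "\<dots> \<le> enn2ereal ((\<Sum>t\<in>{1..<n}. ennreal (\<beta> ^ t) * Er t z) + (\<Sum>t<n. ennreal (\<beta> ^ t) * Ec t z)
      + ennreal (a1 * g z + a2))"
    unfolding less_eq_ennreal.rep_eq[symmetric]
  proof (rule order_trans[OF _ psi_majorant_le[OF z]])
    show "ennreal \<bar>c z\<bar> + ennreal \<beta> * (\<integral>\<^sup>+x. discounted_sum x \<partial>P z)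
      \<le> ennreal \<bar>c z\<bar> + ennreal \<beta> * ((\<Sum>t<n. ennreal (\<beta> ^ t) * Erc (Suc t) z) + ennreal (a1 * (m * g z + d) + a2))"
      using nn_integral_P_discounted_sum_le[OF z] by (intro add_left_mono mult_left_mono) auto
  qed
  also have "\<dots> = (\<Sum>t\<in>{1..<n}. ereal (\<beta> ^ t) * enn2ereal (\<integral>\<^sup>+ \<omega>. ennreal \<bar>r (Z t \<omega>)\<bar> \<partial>M z))
      + (\<Sum>t<n. ereal (\<beta> ^ t) * enn2ereal (\<integral>\<^sup>+ \<omega>. ennreal \<bar>c (Z t \<omega>)\<bar> \<partial>M z))
      + ereal (a1 * g z + a2)"
    using a1_nonneg a2_nonneg g_nonneg[OF z] beta
    by (simp add: plus_ennreal.rep_eq Er_def Ec_def enn2ereal_sum_power_mult)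
  finally show ?thesis .
qed

end

theorem lemma1:
  fixes Zm :: "'z measure" and P :: "'z \<Rightarrow> 'z measure"
    and Om :: "'w measure" and M :: "'z \<Rightarrow> 'w measure" and F :: "nat \<Rightarrow> 'w measure"
    and Z :: "nat \<Rightarrow> 'w \<Rightarrow> 'z"
    and \<beta> :: real and r c g :: "'z \<Rightarrow> real" and n :: nat and m d :: real
  assumes P_kernel: "P \<in> Zm \<rightarrow>\<^sub>M prob_algebra Zm"
    and M_prob: "\<And>z. z \<in> space Zm \<Longrightarrow> prob_space (M z)"
    and M_sets: "\<And>z. z \<in> space Zm \<Longrightarrow> sets (M z) = sets Om"
    and filt: "filtration (space Om) F"
    and F_sub: "\<And>t. sets (F t) \<subseteq> sets Om"
    and adapted: "\<And>t. Z t \<in> F t \<rightarrow>\<^sub>M Zm"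
    and start: "\<And>z. z \<in> space Zm \<Longrightarrow> (AE \<omega> in M z. Z 0 \<omega> = z)"
    and markov: "\<And>z t A B. z \<in> space Zm \<Longrightarrow> A \<in> sets (F t) \<Longrightarrow> B \<in> sets Zm \<Longrightarrow>
        emeasure (M z) (A \<inter> (Z (Suc t) -` B \<inter> space Om))
          = (\<integral>\<^sup>+ \<omega>. emeasure (P (Z t \<omega>)) B * indicator A \<omega> \<partial>M z)"
    and beta: "0 < \<beta>" "\<beta> < 1"
    and r_meas: "r \<in> borel_measurable Zm" and c_meas: "c \<in> borel_measurable Zm"
    and g_meas: "g \<in> borel_measurable Zm" and g_nonneg: "\<And>z. z \<in> space Zm \<Longrightarrow> 0 \<le> g z"
    and m_nonneg: "0 \<le> m" and d_nonneg: "0 \<le> d" and bm: "\<beta> * m < 1"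
    and A_r: "\<And>z. z \<in> space Zm \<Longrightarrow> (\<integral>\<^sup>+ z'. ennreal \<bar>r z'\<bar> \<partial>kpow Zm P n z) \<le> ennreal (g z)"
    and A_c: "\<And>z. z \<in> space Zm \<Longrightarrow> (\<integral>\<^sup>+ z'. ennreal \<bar>c z'\<bar> \<partial>kpow Zm P n z) \<le> ennreal (g z)"
    and A_g: "\<And>z. z \<in> space Zm \<Longrightarrow> (\<integral>\<^sup>+ z'. ennreal (g z') \<partial>P z) \<le> ennreal (m * g z + d)"
  shows "\<exists>a1 a2. 0 \<le> a1 \<and> 0 \<le> a2 \<and> (\<forall>z \<in> space Zm.
      \<bar>vstar M F Z \<beta> r c z\<bar> \<le>
        (\<Sum>t<n. ereal (\<beta> ^ t) * enn2ereal (\<integral>\<^sup>+ \<omega>. ennreal (\<bar>r (Z t \<omega>)\<bar> + \<bar>c (Z t \<omega>)\<bar>) \<partial>M z))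
        + ereal (a1 * g z + a2)
    \<and> \<bar>psistar P M F Z \<beta> r c z\<bar> \<le>
        (\<Sum>t\<in>{1..<n}. ereal (\<beta> ^ t) * enn2ereal (\<integral>\<^sup>+ \<omega>. ennreal \<bar>r (Z t \<omega>)\<bar> \<partial>M z))
        + (\<Sum>t<n. ereal (\<beta> ^ t) * enn2ereal (\<integral>\<^sup>+ \<omega>. ennreal \<bar>c (Z t \<omega>)\<bar> \<partial>M z))
        + ereal (a1 * g z + a2))"
proof -
  interpret drift_bounded_stopping Zm P Om M F Z \<beta> r c g n m d
    by (intro drift_bounded_stopping.intro markov_process.intro drift_bounded_stopping_axioms.intro)
      (fact assms)+
  show ?thesis
    by (intro exI[of _ a1] exI[of _ a2] conjI ballI a1_nonneg a2_nonneg vstar_bound psistar_bound)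
qed

end
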